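(* Let $S$ be a dense subsemigroup of $((0,\infty),+)$, let $(X,\langle T_s\rangle_{s\in S})$ be a dynamical system and let $x,y\in X$. If $x$ and $y$ are proximal near zero, then there is a minimal left ideal $L$ of $O^{+}(S)$ such that $T_u(x)=T_u(y)$ for all $u\in L$.
   Context: "Dense" means dense in the usual topology of $(0,\infty)$. $\beta S$ is the Stone–Čech compactification of the discrete set $S$ (ultrafilters on $S$), with $+$ extended so that $(\beta S,+)$ is a compact right topological semigroup: $A\in p+q$ iff $\{x\in S:-x+A\in q\}\in p$, where $-x+A=\{y\in S:x+y\in A\}$. $O^{+}(S)=\{p\in\beta S: S\cap(0,\epsilon)\in p\text{ for every }\epsilon>0\}$, a compact right topological subsemigroup of $\beta S$. A dynamical system $(X,\langle T_s\rangle_{s\in S})$ consists of a compact Hausdorff space $X$ and continuous maps $T_s:X\to X$ with $T_s\circ T_t=T_{s+t}$. For $p\in\beta S$, $T_p(x)=p\text{-}\lim_{s\in S}T_s(x)$ (the continuous extension of $s\mapsto T_s$ to $\beta S$ into $X^X$); $T_p\circ T_q=T_{p+q}$. Points $x,y\in X$ are proximal near zero iff for every neighbourhood $U$ of the diagonal in $X\times X$ and every $\epsilon>0$ there exists $s\in S\cap(0,\epsilon)$ with $(T_s(x),T_s(y))\in U$. *)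

theory Defs
  imports "HOL-Analysis.Analysis"
begin

definition dense_subsemigroup_pos :: "real set \<Rightarrow> bool" where
  "dense_subsemigroup_pos S \<longleftrightarrow>
     S \<subseteq> {0<..} \<and> (\<forall>s\<in>S. \<forall>t\<in>S. s + t \<in> S) \<and>
     (\<forall>a b. 0 < a \<and> a < b \<longrightarrow> (\<exists>s\<in>S. a < s \<and> s < b))"

definition ultrafilter_on :: "'a set \<Rightarrow> 'a set set \<Rightarrow> bool" where
  "ultrafilter_on S p \<longleftrightarrow>
     (\<forall>A\<in>p. A \<subseteq> S) \<and> S \<in> p \<and> {} \<notin> p \<and>
     (\<forall>A\<in>p. \<forall>B\<in>p. A \<inter> B \<in> p) \<and>
     (\<forall>A B. A \<in> p \<and> A \<subseteq> B \<and> B \<subseteq> S \<longrightarrow> B \<in> p) \<and>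
     (\<forall>A. A \<subseteq> S \<longrightarrow> A \<in> p \<or> S - A \<in> p)"

text \<open>The Stone-Cech compactification beta S (as a set of ultrafilters).\<close>
definition betaS :: "'a set \<Rightarrow> 'a set set set" where
  "betaS S = {p. ultrafilter_on S p}"

definition lshift :: "real set \<Rightarrow> real \<Rightarrow> real set \<Rightarrow> real set" where
  "lshift S x A = {y\<in>S. x + y \<in> A}"

definition bplus :: "real set \<Rightarrow> real set set \<Rightarrow> real set set \<Rightarrow> real set set" where
  "bplus S p q = {A. A \<subseteq> S \<and> {x\<in>S. lshift S x A \<in> q} \<in> p}"

definition Oplus :: "real set \<Rightarrow> real set set set" where
  "Oplus S = {p \<in> betaS S. \<forall>\<epsilon>>0. S \<inter> {0<..<\<epsilon>} \<in> p}"

definition left_ideal :: "'b set \<Rightarrow> ('b \<Rightarrow> 'b \<Rightarrow> 'b) \<Rightarrow> 'b set \<Rightarrow> bool" where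
  "left_ideal M f L \<longleftrightarrow> L \<noteq> {} \<and> L \<subseteq> M \<and> (\<forall>p\<in>M. \<forall>q\<in>L. f p q \<in> L)"

definition minimal_left_ideal :: "'b set \<Rightarrow> ('b \<Rightarrow> 'b \<Rightarrow> 'b) \<Rightarrow> 'b set \<Rightarrow> bool" where
  "minimal_left_ideal M f L \<longleftrightarrow> left_ideal M f L \<and>
     (\<forall>L'. left_ideal M f L' \<and> L' \<subseteq> L \<longrightarrow> L' = L)"

definition plim :: "'a set \<Rightarrow> 'a set set \<Rightarrow> ('a \<Rightarrow> 'x::topological_space) \<Rightarrow> 'x" where
  "plim S p f = (THE z. \<forall>U. open U \<and> z \<in> U \<longrightarrow> {s\<in>S. f s \<in> U} \<in> p)"

definition Tbeta :: "real set \<Rightarrow> (real \<Rightarrow> 'x \<Rightarrow> 'x::topological_space) \<Rightarrow> real set set \<Rightarrow> 'x \<Rightarrow> 'x" where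
  "Tbeta S T p x = plim S p (\<lambda>s. T s x)"

definition dyn_system :: "real set \<Rightarrow> (real \<Rightarrow> 'x \<Rightarrow> 'x::t2_space) \<Rightarrow> bool" where
  "dyn_system S T \<longleftrightarrow> compact (UNIV :: 'x set) \<and>
     (\<forall>s\<in>S. continuous_on UNIV (T s)) \<and>
     (\<forall>s\<in>S. \<forall>t\<in>S. T s \<circ> T t = T (s + t))"

definition diag_nbhd :: "('x::topological_space \<times> 'x) set \<Rightarrow> bool" where
  "diag_nbhd U \<longleftrightarrow> (\<exists>V. open V \<and> (\<forall>z. (z, z) \<in> V) \<and> V \<subseteq> U)"

definition proximal_near_zero :: "real set \<Rightarrow> (real \<Rightarrow> 'x \<Rightarrow> 'x::topological_space) \<Rightarrow> 'x \<Rightarrow> 'x \<Rightarrow> bool" where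
  "proximal_near_zero S T x y \<longleftrightarrow>
     (\<forall>U \<epsilon>. diag_nbhd U \<and> \<epsilon> > 0 \<longrightarrow> (\<exists>s\<in>S. 0 < s \<and> s < \<epsilon> \<and> (T s x, T s y) \<in> U))"

end

theory Submission
  imports Defs
begin

text \<open>Proximality near zero says that the sets
  \<open>{s \<in> S \<inter> (0,\<epsilon>). (T\<^sub>s x, T\<^sub>s y) \<in> W}\<close>, for \<open>\<epsilon> > 0\<close> and \<open>W\<close> a neighbourhood of the
  diagonal, have the finite intersection property. An ultrafilter \<open>p\<close> containing all of them lies
  in \<open>O\<^sup>+(S)\<close>, and since the compact Hausdorff space \<open>X\<close> is regular, \<open>T\<^sub>p(x) = T\<^sub>p(y)\<close>.
  As \<open>T\<^sub>q\<^sub>+\<^sub>u = T\<^sub>q \<circ> T\<^sub>u\<close>, all such \<open>u \<in> O\<^sup>+(S)\<close> form a left ideal. Finally every left ideal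
  of \<open>O\<^sup>+(S)\<close> contains a minimal one: by compactness and Zorn's lemma it contains a minimal
  closed left ideal, and this is minimal among all left ideals because each principal left ideal
  \<open>O\<^sup>+(S) + v\<close> is closed, right translation being continuous.\<close>

section \<open>Ultrafilters\<close>

lemma ultrafilter_onD:
  assumes "ultrafilter_on S p"
  shows "\<forall>A\<in>p. A \<subseteq> S" "S \<in> p" "{} \<notin> p" "\<forall>A\<in>p. \<forall>B\<in>p. A \<inter> B \<in> p"
    "\<forall>A B. A \<in> p \<and> A \<subseteq> B \<and> B \<subseteq> S \<longrightarrow> B \<in> p"
    "\<forall>A. A \<subseteq> S \<longrightarrow> A \<in> p \<or> S - A \<in> p"
  using assms unfolding ultrafilter_on_def by - (elim conjE, assumption)+

lemma uf_subset: "ultrafilter_on S p \<Longrightarrow> A \<in> p \<Longrightarrow> A \<subseteq> S"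
  using ultrafilter_onD(1) by blast

lemma uf_carrier: "ultrafilter_on S p \<Longrightarrow> S \<in> p"
  using ultrafilter_onD(2) by blast

lemma uf_empty: "ultrafilter_on S p \<Longrightarrow> {} \<notin> p"
  using ultrafilter_onD(3) by blast

lemma uf_Int: "ultrafilter_on S p \<Longrightarrow> A \<in> p \<Longrightarrow> B \<in> p \<Longrightarrow> A \<inter> B \<in> p"
  using ultrafilter_onD(4) by blast

lemma uf_upward: "ultrafilter_on S p \<Longrightarrow> A \<in> p \<Longrightarrow> A \<subseteq> B \<Longrightarrow> B \<subseteq> S \<Longrightarrow> B \<in> p"
  using ultrafilter_onD(5) by blast

lemma uf_compl: "ultrafilter_on S p \<Longrightarrow> A \<subseteq> S \<Longrightarrow> A \<in> p \<or> S - A \<in> p"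
  using ultrafilter_onD(6) by blast

lemma uf_Diff_iff:
  assumes p: "ultrafilter_on S p" and "A \<subseteq> S"
  shows "S - A \<in> p \<longleftrightarrow> A \<notin> p"
proof
  assume "S - A \<in> p"
  show "A \<notin> p"
  proof
    assume "A \<in> p"
    with \<open>S - A \<in> p\<close> have "A \<inter> (S - A) \<in> p" using uf_Int[OF p] by blast
    then show False using uf_empty[OF p] by simp
  qed
next
  assume "A \<notin> p"
  with uf_compl[OF p \<open>A \<subseteq> S\<close>] show "S - A \<in> p" by blast
qed

lemma uf_finite_Inter:
  assumes p: "ultrafilter_on S p" and "finite F" "F \<subseteq> p"
  shows "S \<inter> \<Inter>F \<in> p"
  using assms(2,3)
proof (induction F rule: finite_induct)
  case empty
  then show ?case using uf_carrier[OF p] by simp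
next
  case (insert A F)
  then have "A \<inter> (S \<inter> \<Inter>F) \<in> p" using uf_Int[OF p] by simp
  then show ?case by (simp add: Int_left_commute)
qed

lemma uf_finite_Inter_nonempty:
  "ultrafilter_on S p \<Longrightarrow> finite F \<Longrightarrow> F \<subseteq> p \<Longrightarrow> \<exists>s\<in>S. \<forall>A\<in>F. s \<in> A"
proof -
  assume "ultrafilter_on S p" "finite F" "F \<subseteq> p"
  then have "S \<inter> \<Inter>F \<noteq> {}" using uf_finite_Inter uf_empty by fastforce
  then show ?thesis by blast
qed

lemma uf_eqI:
  assumes p: "ultrafilter_on S p" and q: "ultrafilter_on S q" and "p \<subseteq> q"
  shows "p = q"
proof (rule antisym)
  show "q \<subseteq> p"
  proof
    fix A assume "A \<in> q"
    with q have "A \<subseteq> S" "S - A \<notin> q" by (auto simp: uf_subset uf_Diff_iff)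
    with \<open>p \<subseteq> q\<close> p show "A \<in> p" using uf_Diff_iff by blast
  qed
qed fact

definition has_fip :: "'a set \<Rightarrow> 'a set set \<Rightarrow> bool" where
  "has_fip S G \<longleftrightarrow> (\<forall>F. finite F \<and> F \<subseteq> G \<longrightarrow> (\<exists>s\<in>S. \<forall>A\<in>F. s \<in> A))"

lemma has_fip_directed:
  assumes "G \<noteq> {}" and meets: "\<And>A. A \<in> G \<Longrightarrow> \<exists>s\<in>S. s \<in> A"
    and directed: "\<And>A B. A \<in> G \<Longrightarrow> B \<in> G \<Longrightarrow> \<exists>C\<in>G. C \<subseteq> A \<inter> B"
  shows "has_fip S G"
  unfolding has_fip_def
proof (intro allI impI, elim conjE)
  fix F assume "finite F" "F \<subseteq> G"
  have "\<exists>C\<in>G. C \<subseteq> \<Inter>F" using \<open>finite F\<close> \<open>F \<subseteq> G\<close>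
  proof (induction F rule: finite_induct)
    case empty
    then show ?case using \<open>G \<noteq> {}\<close> by blast
  next
    case (insert A F)
    then obtain C where "C \<in> G" "C \<subseteq> \<Inter>F" by blast
    moreover obtain D where "D \<in> G" "D \<subseteq> A \<inter> C"
      using directed[of A C] insert.prems \<open>C \<in> G\<close> by blast
    ultimately show ?case by blast
  qed
  then obtain C where "C \<in> G" "C \<subseteq> \<Inter>F" by blast
  moreover obtain s where "s \<in> S" "s \<in> C" using meets \<open>C \<in> G\<close> by blast
  ultimately show "\<exists>s\<in>S. \<forall>A\<in>F. s \<in> A" by blast
qed

lemma has_fip_insert:
  assumes "\<And>F. finite F \<Longrightarrow> F \<subseteq> M \<Longrightarrow> \<exists>s\<in>S. s \<in> A \<and> (\<forall>B\<in>F. s \<in> B)"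
  shows "has_fip S (insert A M)"
  unfolding has_fip_def
proof (intro allI impI)
  fix F assume "finite F \<and> F \<subseteq> insert A M"
  then obtain s where "s \<in> S" "s \<in> A" "\<forall>B\<in>F - {A}. s \<in> B"
    using assms[of "F - {A}"] by auto
  then show "\<exists>s\<in>S. \<forall>A\<in>F. s \<in> A" by blast
qed

lemma has_fip_Union_chain:
  assumes "C \<noteq> {}" "subset.chain C C" "\<And>H. H \<in> C \<Longrightarrow> has_fip S H"
  shows "has_fip S (\<Union>C)"
  unfolding has_fip_def
proof (intro allI impI)
  fix F assume F: "finite F \<and> F \<subseteq> \<Union>C"
  then obtain H where "H \<in> C" "F \<subseteq> H"
    using finite_subset_Union_chain[of F C C] assms(1,2) by blast
  with F assms(3) show "\<exists>s\<in>S. \<forall>A\<in>F. s \<in> A"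
    unfolding has_fip_def by blast
qed

text \<open>A maximal family with the finite intersection property contains every set meeting all
  finite intersections of its members, which makes it an ultrafilter.\<close>

lemma has_fip_imp_ultrafilter:
  assumes G: "G \<subseteq> Pow S" and fip: "has_fip S G"
  shows "\<exists>p. ultrafilter_on S p \<and> G \<subseteq> p"
proof -
  define \<A> where "\<A> = {H. G \<subseteq> H \<and> H \<subseteq> Pow S \<and> has_fip S H}"
  have "\<exists>M\<in>\<A>. \<forall>H\<in>\<A>. M \<subseteq> H \<longrightarrow> H = M"
  proof (rule subset_Zorn_nonempty)
    show "\<A> \<noteq> {}" using G fip unfolding \<A>_def by auto
  next
    fix C assume C: "C \<noteq> {}" "subset.chain \<A> C"
    then have "C \<subseteq> \<A>" "subset.chain C C" by (simp_all add: subset_chain_def)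
    then have "has_fip S (\<Union>C)" "G \<subseteq> \<Union>C" "\<Union>C \<subseteq> Pow S"
      using has_fip_Union_chain[OF C(1)] C(1) unfolding \<A>_def by blast+
    then show "\<Union>C \<in> \<A>" unfolding \<A>_def by simp
  qed
  then obtain M where "M \<in> \<A>" and max: "\<And>H. H \<in> \<A> \<Longrightarrow> M \<subseteq> H \<Longrightarrow> H = M"
    by blast
  then have M: "G \<subseteq> M" "M \<subseteq> Pow S" "has_fip S M" unfolding \<A>_def by simp_all
  have fipM: "\<exists>s\<in>S. \<forall>B\<in>F. s \<in> B" if "finite F" "F \<subseteq> M" for F
    using M(3) that unfolding has_fip_def by blast
  define meets where "meets A \<longleftrightarrow> (\<forall>F. finite F \<and> F \<subseteq> M \<longrightarrow> (\<exists>s\<in>S. s \<in> A \<and> (\<forall>B\<in>F. s \<in> B)))"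
    for A
  have meets_in: "A \<in> M" if "A \<subseteq> S" "meets A" for A
  proof -
    have "has_fip S (insert A M)"
      using \<open>meets A\<close> unfolding meets_def by (intro has_fip_insert) blast
    with that M(1,2) have "insert A M \<in> \<A>" unfolding \<A>_def by blast
    then show ?thesis using max by blast
  qed
  have "ultrafilter_on S M"
    unfolding ultrafilter_on_def
  proof (intro conjI ballI allI impI)
    show "A \<subseteq> S" if "A \<in> M" for A using that M(2) by blast
    show "S \<in> M" using fipM by (intro meets_in) (auto simp: meets_def)
    show "{} \<notin> M" using fipM[of "{{}}"] by auto
    show "A \<inter> B \<in> M" if "A \<in> M" "B \<in> M" for A B
    proof (rule meets_in)
      show "A \<inter> B \<subseteq> S" using that M(2) by blast
      show "meets (A \<inter> B)" unfolding meets_def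
      proof (intro allI impI)
        fix F assume "finite F \<and> F \<subseteq> M"
        then show "\<exists>s\<in>S. s \<in> A \<inter> B \<and> (\<forall>C\<in>F. s \<in> C)"
          using fipM[of "insert A (insert B F)"] that by auto
      qed
    qed
    show "B \<in> M" if "A \<in> M \<and> A \<subseteq> B \<and> B \<subseteq> S" for A B
    proof (rule meets_in)
      show "B \<subseteq> S" using that by blast
      show "meets B" unfolding meets_def
      proof (intro allI impI)
        fix F assume "finite F \<and> F \<subseteq> M"
        then show "\<exists>s\<in>S. s \<in> B \<and> (\<forall>C\<in>F. s \<in> C)"
          using fipM[of "insert A F"] that by auto
      qed
    qed
    show "A \<in> M \<or> S - A \<in> M" if "A \<subseteq> S" for A
    proof (rule ccontr)
      assume "\<not> (A \<in> M \<or> S - A \<in> M)"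
      then have "\<not> meets A" "\<not> meets (S - A)" using meets_in that by blast+
      then obtain F1 F2 where F: "finite F1" "F1 \<subseteq> M" "finite F2" "F2 \<subseteq> M"
        and F1: "\<And>s. s \<in> S \<Longrightarrow> s \<in> A \<Longrightarrow> \<exists>B\<in>F1. s \<notin> B"
        and F2: "\<And>s. s \<in> S \<Longrightarrow> s \<notin> A \<Longrightarrow> \<exists>B\<in>F2. s \<notin> B"
        unfolding meets_def by (metis Diff_iff)
      obtain s where "s \<in> S" "\<forall>B\<in>F1 \<union> F2. s \<in> B" using fipM[of "F1 \<union> F2"] F by blast
      then show False using F1 F2 by (cases "s \<in> A") auto
    qed
  qed
  with M(1) show ?thesis by blast
qed

section \<open>The semigroup \<open>O\<^sup>+(S)\<close>\<close>

lemma lshift_subset: "lshift S x A \<subseteq> S"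
  by (auto simp: lshift_def)

lemma lshift_mono: "A \<subseteq> B \<Longrightarrow> lshift S x A \<subseteq> lshift S x B"
  by (auto simp: lshift_def)

lemma lshift_Int: "lshift S x (A \<inter> B) = lshift S x A \<inter> lshift S x B"
  by (auto simp: lshift_def)

lemma lshift_carrier: "\<forall>s\<in>S. \<forall>t\<in>S. s + t \<in> S \<Longrightarrow> x \<in> S \<Longrightarrow> lshift S x S = S"
  by (auto simp: lshift_def)

lemma lshift_Diff: "\<forall>s\<in>S. \<forall>t\<in>S. s + t \<in> S \<Longrightarrow> x \<in> S \<Longrightarrow> lshift S x (S - A) = S - lshift S x A"
  by (auto simp: lshift_def)

lemma lshift_lshift:
  "\<forall>s\<in>S. \<forall>t\<in>S. s + t \<in> S \<Longrightarrow> s \<in> S \<Longrightarrow> t \<in> S \<Longrightarrow> lshift S t (lshift S s A) = lshift S (s + t) A"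
  by (auto simp: lshift_def add.assoc)

lemma bplus_iff: "A \<in> bplus S p q \<longleftrightarrow> A \<subseteq> S \<and> {s\<in>S. lshift S s A \<in> q} \<in> p"
  by (simp add: bplus_def)

lemma ultrafilter_bplus:
  assumes add: "\<forall>s\<in>S. \<forall>t\<in>S. s + t \<in> S"
    and p: "ultrafilter_on S p" and q: "ultrafilter_on S q"
  shows "ultrafilter_on S (bplus S p q)"
  unfolding ultrafilter_on_def
proof (intro conjI ballI allI impI)
  show "A \<subseteq> S" if "A \<in> bplus S p q" for A
    using that by (simp add: bplus_iff)
  have "{s\<in>S. lshift S s S \<in> q} = S"
    using lshift_carrier[OF add] uf_carrier[OF q] by auto
  then show "S \<in> bplus S p q"
    using uf_carrier[OF p] by (simp add: bplus_iff)
  have "{s\<in>S. lshift S s {} \<in> q} = {}"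
    using uf_empty[OF q] by (simp add: lshift_def)
  then show "{} \<notin> bplus S p q"
    unfolding bplus_iff using uf_empty[OF p] by argo
  show "A \<inter> B \<in> bplus S p q" if "A \<in> bplus S p q" "B \<in> bplus S p q" for A B
  proof -
    have "{s\<in>S. lshift S s A \<in> q} \<inter> {s\<in>S. lshift S s B \<in> q} \<in> p"
      using that uf_Int[OF p] by (simp add: bplus_iff)
    moreover have "{s\<in>S. lshift S s A \<in> q} \<inter> {s\<in>S. lshift S s B \<in> q}
        = {s\<in>S. lshift S s (A \<inter> B) \<in> q}"
      using uf_Int[OF q] uf_upward[OF q] lshift_subset[of S]
      by (auto simp: lshift_Int)
    ultimately show ?thesis using that by (auto simp: bplus_iff)
  qed
  show "B \<in> bplus S p q" if "A \<in> bplus S p q \<and> A \<subseteq> B \<and> B \<subseteq> S" for A B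
  proof -
    have "{s\<in>S. lshift S s A \<in> q} \<subseteq> {s\<in>S. lshift S s B \<in> q}"
      using that uf_upward[OF q] lshift_mono[of A B S] lshift_subset[of S _ B] by blast
    then show ?thesis
      using that uf_upward[OF p] by (auto simp: bplus_iff)
  qed
  show "A \<in> bplus S p q \<or> S - A \<in> bplus S p q" if "A \<subseteq> S" for A
  proof -
    have "{s\<in>S. lshift S s (S - A) \<in> q} = S - {s\<in>S. lshift S s A \<in> q}"
      using lshift_Diff[OF add] uf_Diff_iff[OF q lshift_subset] by auto
    then show ?thesis
      using that uf_compl[OF p, of "{s\<in>S. lshift S s A \<in> q}"] by (auto simp: bplus_iff)
  qed
qed

lemma bplus_assoc:
  assumes add: "\<forall>s\<in>S. \<forall>t\<in>S. s + t \<in> S"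
  shows "bplus S r (bplus S q v) = bplus S (bplus S r q) v"
proof (rule set_eqI)
  fix A
  have "lshift S s {t\<in>S. lshift S t A \<in> v} = {t\<in>S. lshift S t (lshift S s A) \<in> v}" if "s \<in> S" for s
    using that add lshift_lshift[OF add that] by (auto simp: lshift_def)
  then have "{s\<in>S. lshift S s A \<in> bplus S q v} = {s\<in>S. lshift S s {t\<in>S. lshift S t A \<in> v} \<in> q}"
    by (auto simp: bplus_iff lshift_subset)
  then show "A \<in> bplus S r (bplus S q v) \<longleftrightarrow> A \<in> bplus S (bplus S r q) v"
    by (auto simp: bplus_iff)
qed

definition near_zero_sets :: "real set \<Rightarrow> real set set" where
  "near_zero_sets S = (\<lambda>\<epsilon>. S \<inter> {0<..<\<epsilon>}) ` {0<..}"

lemma Oplus_iff: "p \<in> Oplus S \<longleftrightarrow> ultrafilter_on S p \<and> near_zero_sets S \<subseteq> p"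
  by (auto simp: Oplus_def betaS_def near_zero_sets_def)

lemma Oplus_ultrafilter: "p \<in> Oplus S \<Longrightarrow> ultrafilter_on S p"
  by (simp add: Oplus_iff)

lemma Oplus_near_zero: "p \<in> Oplus S \<Longrightarrow> \<epsilon> > 0 \<Longrightarrow> S \<inter> {0<..<\<epsilon>} \<in> p"
  by (simp add: Oplus_def)

lemma bplus_Oplus:
  assumes add: "\<forall>s\<in>S. \<forall>t\<in>S. s + t \<in> S" and pos: "S \<subseteq> {0<..}"
    and p: "p \<in> Oplus S" and q: "q \<in> Oplus S"
  shows "bplus S p q \<in> Oplus S"
  unfolding Oplus_def betaS_def
proof (intro CollectI conjI allI impI)
  show "ultrafilter_on S (bplus S p q)"
    using ultrafilter_bplus[OF add Oplus_ultrafilter[OF p] Oplus_ultrafilter[OF q]] .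
  fix \<epsilon> :: real assume "\<epsilon> > 0"
  have "S \<inter> {0<..<\<epsilon>} \<subseteq> {s\<in>S. lshift S s (S \<inter> {0<..<\<epsilon>}) \<in> q}"
  proof
    fix s assume s: "s \<in> S \<inter> {0<..<\<epsilon>}"
    have "S \<inter> {0<..<\<epsilon> - s} \<subseteq> lshift S s (S \<inter> {0<..<\<epsilon>})"
      using s add pos by (auto simp: lshift_def)
    moreover have "S \<inter> {0<..<\<epsilon> - s} \<in> q" using Oplus_near_zero[OF q] s by auto
    ultimately show "s \<in> {s\<in>S. lshift S s (S \<inter> {0<..<\<epsilon>}) \<in> q}"
      using s uf_upward[OF Oplus_ultrafilter[OF q]] lshift_subset by blast
  qed
  then show "S \<inter> {0<..<\<epsilon>} \<in> bplus S p q"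
    using uf_upward[OF Oplus_ultrafilter[OF p] Oplus_near_zero[OF p \<open>\<epsilon> > 0\<close>]]
    by (simp add: bplus_iff)
qed

section \<open>Minimal left ideals\<close>

lemma subset_Zorn_minimal:
  assumes "\<A> \<noteq> {}" and ch: "\<And>\<C>. \<C> \<noteq> {} \<Longrightarrow> subset.chain \<A> \<C> \<Longrightarrow> \<Inter>\<C> \<in> \<A>"
  shows "\<exists>M\<in>\<A>. \<forall>X\<in>\<A>. X \<subseteq> M \<longrightarrow> X = M"
proof -
  have "\<exists>M\<in>uminus ` \<A>. \<forall>X\<in>uminus ` \<A>. M \<subseteq> X \<longrightarrow> X = M"
  proof (rule subset_Zorn_nonempty)
    show "uminus ` \<A> \<noteq> {}" using \<open>\<A> \<noteq> {}\<close> by blast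
  next
    fix \<C> assume "\<C> \<noteq> {}" "subset.chain (uminus ` \<A>) \<C>"
    then have "\<C> \<subseteq> uminus ` \<A>" "\<forall>X\<in>\<C>. \<forall>Y\<in>\<C>. X \<subseteq> Y \<or> Y \<subseteq> X"
      by (simp_all add: subset_chain_def)
    then have "uminus ` \<C> \<subseteq> \<A>" "\<forall>X\<in>uminus ` \<C>. \<forall>Y\<in>uminus ` \<C>. X \<subseteq> Y \<or> Y \<subseteq> X"
      by (force, blast)
    then have "\<Inter>(uminus ` \<C>) \<in> \<A>"
      using \<open>\<C> \<noteq> {}\<close> by (intro ch) (simp_all add: subset_chain_def)
    moreover have "\<Union>\<C> = - \<Inter>(uminus ` \<C>)" by auto
    ultimately show "\<Union>\<C> \<in> uminus ` \<A>" by blast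
  qed
  then obtain M where "M \<in> \<A>" and max: "\<forall>X\<in>uminus ` \<A>. - M \<subseteq> X \<longrightarrow> X = - M"
    by blast
  have "X = M" if "X \<in> \<A>" "X \<subseteq> M" for X
    using max[rule_format, of "- X"] that by auto
  with \<open>M \<in> \<A>\<close> show ?thesis by blast
qed

lemma left_ideal_principal:
  assumes closed: "\<And>p q. p \<in> M \<Longrightarrow> q \<in> M \<Longrightarrow> f p q \<in> M"
    and assoc: "\<And>p q r. p \<in> M \<Longrightarrow> q \<in> M \<Longrightarrow> r \<in> M \<Longrightarrow> f p (f q r) = f (f p q) r"
    and "v \<in> M"
  shows "left_ideal M f ((\<lambda>q. f q v) ` M)"
  unfolding left_ideal_def
proof (intro conjI ballI)
  show "(\<lambda>q. f q v) ` M \<noteq> {}" "(\<lambda>q. f q v) ` M \<subseteq> M"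
    using \<open>v \<in> M\<close> closed by auto
  show "f p w \<in> (\<lambda>q. f q v) ` M" if "p \<in> M" "w \<in> (\<lambda>q. f q v) ` M" for p w
    using that \<open>v \<in> M\<close> closed assoc by auto
qed

lemma left_ideal_nonempty: "left_ideal M f L \<Longrightarrow> L \<noteq> {}"
  by (simp add: left_ideal_def)

lemma left_ideal_subset: "left_ideal M f L \<Longrightarrow> L \<subseteq> M"
  by (simp add: left_ideal_def)

lemma left_ideal_principal_subset: "left_ideal M f L \<Longrightarrow> v \<in> L \<Longrightarrow> (\<lambda>q. f q v) ` M \<subseteq> L"
  unfolding left_ideal_def by blast

lemma left_ideal_Inter:
  assumes "\<K> \<noteq> {}" "\<Inter>\<K> \<noteq> {}" "\<And>L. L \<in> \<K> \<Longrightarrow> left_ideal M f L"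
  shows "left_ideal M f (\<Inter>\<K>)"
  using assms unfolding left_ideal_def by blast

lemma bplus_left_ideal_principal:
  assumes "\<forall>s\<in>S. \<forall>t\<in>S. s + t \<in> S" "S \<subseteq> {0<..}" "v \<in> Oplus S"
  shows "left_ideal (Oplus S) (bplus S) ((\<lambda>q. bplus S q v) ` Oplus S)"
  using assms bplus_Oplus bplus_assoc by (intro left_ideal_principal) blast+

text \<open>The closed subsets of \<open>\<beta>S\<close> are the sets of all ultrafilters refining a filter; accordingly a
  subset of \<open>O\<^sup>+(S)\<close> is closed iff it contains every member of \<open>O\<^sup>+(S)\<close> extending its kernel.\<close>

definition uf_kernel :: "'a set \<Rightarrow> 'a set set set \<Rightarrow> 'a set set" where
  "uf_kernel S C = {A. A \<subseteq> S \<and> (\<forall>u\<in>C. A \<in> u)}"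

definition Oplus_closed :: "real set \<Rightarrow> real set set set \<Rightarrow> bool" where
  "Oplus_closed S C \<longleftrightarrow> C \<subseteq> Oplus S \<and> (\<forall>u\<in>Oplus S. uf_kernel S C \<subseteq> u \<longrightarrow> u \<in> C)"

lemma Oplus_closedD: "Oplus_closed S C \<Longrightarrow> u \<in> Oplus S \<Longrightarrow> uf_kernel S C \<subseteq> u \<Longrightarrow> u \<in> C"
  unfolding Oplus_closed_def by blast

lemma uf_kernel_antimono: "C \<subseteq> D \<Longrightarrow> uf_kernel S D \<subseteq> uf_kernel S C"
  unfolding uf_kernel_def by auto

lemma Oplus_closed_Inter:
  assumes "\<K> \<noteq> {}" "\<And>C. C \<in> \<K> \<Longrightarrow> Oplus_closed S C"
  shows "Oplus_closed S (\<Inter>\<K>)"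
  unfolding Oplus_closed_def
proof (intro conjI ballI impI)
  show "\<Inter>\<K> \<subseteq> Oplus S" using assms unfolding Oplus_closed_def by blast
  fix u assume "u \<in> Oplus S" "uf_kernel S (\<Inter>\<K>) \<subseteq> u"
  then show "u \<in> \<Inter>\<K>"
    using assms(2) Oplus_closedD uf_kernel_antimono[of "\<Inter>\<K>"] by blast
qed

lemma Oplus_closed_member: "B \<subseteq> S \<Longrightarrow> Oplus_closed S {q \<in> Oplus S. B \<in> q}"
  unfolding Oplus_closed_def uf_kernel_def by blast

lemma Oplus_closed_fip_Inter:
  assumes closed: "\<And>C. C \<in> \<K> \<Longrightarrow> Oplus_closed S C"
    and fip: "\<And>\<F>. finite \<F> \<Longrightarrow> \<F> \<subseteq> \<K> \<Longrightarrow> Oplus S \<inter> \<Inter>\<F> \<noteq> {}"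
  shows "Oplus S \<inter> \<Inter>\<K> \<noteq> {}"
proof -
  define G where "G = \<Union>(uf_kernel S ` \<K>) \<union> near_zero_sets S"
  have "G \<subseteq> Pow S" unfolding G_def uf_kernel_def near_zero_sets_def by auto
  moreover have "has_fip S G"
    unfolding has_fip_def
  proof (intro allI impI)
    fix F assume F: "finite F \<and> F \<subseteq> G"
    then obtain \<G> where "finite \<G>" "\<G> \<subseteq> uf_kernel S ` \<K>" "F \<inter> \<Union>(uf_kernel S ` \<K>) \<subseteq> \<Union>\<G>"
      using finite_subset_Union[of "F \<inter> \<Union>(uf_kernel S ` \<K>)"] by blast
    then obtain \<F> where \<F>: "finite \<F>" "\<F> \<subseteq> \<K>" "F \<inter> \<Union>(uf_kernel S ` \<K>) \<subseteq> \<Union>(uf_kernel S ` \<F>)"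
      by (metis finite_subset_image)
    then obtain u where u: "u \<in> Oplus S" "u \<in> \<Inter>\<F>" using fip by blast
    have "F \<subseteq> u"
    proof
      fix A assume "A \<in> F"
      show "A \<in> u"
      proof (cases "A \<in> near_zero_sets S")
        case True
        then show ?thesis using u(1) by (auto simp: Oplus_iff)
      next
        case False
        then have "A \<in> \<Union>(uf_kernel S ` \<F>)" using \<open>A \<in> F\<close> F \<F>(3) unfolding G_def by blast
        then show ?thesis using u(2) unfolding uf_kernel_def by blast
      qed
    qed
    then show "\<exists>s\<in>S. \<forall>A\<in>F. s \<in> A"
      using uf_finite_Inter_nonempty[OF Oplus_ultrafilter[OF u(1)]] F by blast
  qed
  ultimately obtain q where q: "ultrafilter_on S q" "G \<subseteq> q"
    using has_fip_imp_ultrafilter by blast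
  then have "q \<in> Oplus S" unfolding G_def by (simp add: Oplus_iff)
  moreover have "q \<in> C" if "C \<in> \<K>" for C
    using closed[OF that] \<open>q \<in> Oplus S\<close> q(2) that unfolding G_def by (blast intro: Oplus_closedD)
  ultimately show ?thesis by blast
qed

lemma Oplus_closed_principal:
  assumes add: "\<forall>s\<in>S. \<forall>t\<in>S. s + t \<in> S" and pos: "S \<subseteq> {0<..}" and v: "v \<in> Oplus S"
  shows "Oplus_closed S ((\<lambda>q. bplus S q v) ` Oplus S)"
  unfolding Oplus_closed_def
proof (intro conjI ballI impI)
  let ?R = "(\<lambda>q. bplus S q v) ` Oplus S"
  have v_uf: "ultrafilter_on S v" using Oplus_ultrafilter[OF v] .
  have sum_uf: "ultrafilter_on S (bplus S q v)" if "q \<in> Oplus S" for q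
    using ultrafilter_bplus[OF add Oplus_ultrafilter[OF that] v_uf] .
  show "?R \<subseteq> Oplus S" using bplus_Oplus[OF add pos _ v] by blast
  fix u assume u: "u \<in> Oplus S" "uf_kernel S ?R \<subseteq> u"
  have u_uf: "ultrafilter_on S u" using Oplus_ultrafilter[OF u(1)] .
  define C where "C A = {q \<in> Oplus S. A \<in> bplus S q v}" for A
  have closed: "Oplus_closed S (C A)" if "A \<in> u" for A
  proof -
    have "C A = {q \<in> Oplus S. {s\<in>S. lshift S s A \<in> v} \<in> q}"
      using uf_subset[OF u_uf that] unfolding C_def by (auto simp: bplus_iff)
    then show ?thesis using Oplus_closed_member[of "{s\<in>S. lshift S s A \<in> v}" S] by simp
  qed
  have meet: "Oplus S \<inter> \<Inter>(C ` \<F>) \<noteq> {}" if "finite \<F>" "\<F> \<subseteq> u" for \<F>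
  proof -
    define A0 where "A0 = S \<inter> \<Inter>\<F>"
    have "A0 \<in> u" "A0 \<subseteq> S" unfolding A0_def using uf_finite_Inter[OF u_uf that] by blast+
    have "\<exists>q\<in>Oplus S. A0 \<in> bplus S q v"
    proof (rule ccontr)
      assume "\<not> ?thesis"
      then have "\<forall>q\<in>Oplus S. S - A0 \<in> bplus S q v"
        using uf_Diff_iff[OF sum_uf \<open>A0 \<subseteq> S\<close>] by blast
      then have "S - A0 \<in> uf_kernel S ?R" unfolding uf_kernel_def by blast
      then have "S - A0 \<in> u" using u(2) by blast
      then show False using uf_Diff_iff[OF u_uf \<open>A0 \<subseteq> S\<close>] \<open>A0 \<in> u\<close> by blast
    qed
    then obtain q where q: "q \<in> Oplus S" "A0 \<in> bplus S q v" by blast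
    have "q \<in> C A" if "A \<in> \<F>" for A
    proof -
      have "A0 \<subseteq> A" "A \<subseteq> S" using that \<open>\<F> \<subseteq> u\<close> uf_subset[OF u_uf] unfolding A0_def by blast+
      then show ?thesis using uf_upward[OF sum_uf[OF q(1)] q(2)] q(1) unfolding C_def by blast
    qed
    then show ?thesis using q(1) by blast
  qed
  have "Oplus S \<inter> \<Inter>(C ` u) \<noteq> {}"
  proof (rule Oplus_closed_fip_Inter)
    show "Oplus_closed S D" if "D \<in> C ` u" for D using that closed by blast
    fix \<F>' assume "finite \<F>'" "\<F>' \<subseteq> C ` u"
    then obtain \<F> where "finite \<F>" "\<F> \<subseteq> u" "\<F>' = C ` \<F>"
      by (meson finite_subset_image)
    then show "Oplus S \<inter> \<Inter>\<F>' \<noteq> {}" using meet by blast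
  qed
  then obtain q where q: "q \<in> Oplus S" "\<forall>A\<in>u. A \<in> bplus S q v"
    unfolding C_def by blast
  then have "u = bplus S q v" using uf_eqI[OF u_uf sum_uf] by blast
  then show "u \<in> ?R" using q(1) by blast
qed

lemma left_ideal_contains_minimal:
  assumes add: "\<forall>s\<in>S. \<forall>t\<in>S. s + t \<in> S" and pos: "S \<subseteq> {0<..}"
    and P: "left_ideal (Oplus S) (bplus S) P"
  shows "\<exists>L. minimal_left_ideal (Oplus S) (bplus S) L \<and> L \<subseteq> P"
proof -
  define \<C> where "\<C> = {C. Oplus_closed S C \<and> left_ideal (Oplus S) (bplus S) C \<and> C \<subseteq> P}"
  have principal: "(\<lambda>q. bplus S q v) ` Oplus S \<in> \<C> \<and> (\<lambda>q. bplus S q v) ` Oplus S \<subseteq> L"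
    if L: "left_ideal (Oplus S) (bplus S) L" "L \<subseteq> P" and "v \<in> L" for v L
  proof -
    have "v \<in> Oplus S" using left_ideal_subset[OF L(1)] \<open>v \<in> L\<close> by blast
    moreover have "(\<lambda>q. bplus S q v) ` Oplus S \<subseteq> L"
      using left_ideal_principal_subset[OF L(1) \<open>v \<in> L\<close>] .
    ultimately show ?thesis
      using Oplus_closed_principal[OF add pos] bplus_left_ideal_principal[OF add pos] L(2)
      unfolding \<C>_def by blast
  qed
  have "\<exists>C0\<in>\<C>. \<forall>C\<in>\<C>. C \<subseteq> C0 \<longrightarrow> C = C0"
  proof (rule subset_Zorn_minimal)
    obtain p where "p \<in> P" using left_ideal_nonempty[OF P] by blast
    then show "\<C> \<noteq> {}" using principal[OF P order_refl] by blast
  next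
    fix \<K> assume "\<K> \<noteq> {}" "subset.chain \<C> \<K>"
    then have \<K>: "\<K> \<subseteq> \<C>" and chain: "\<forall>C\<in>\<K>. \<forall>D\<in>\<K>. C \<subseteq> D \<or> D \<subseteq> C"
      by (simp_all add: subset_chain_def)
    have "Oplus S \<inter> \<Inter>\<K> \<noteq> {}"
    proof (rule Oplus_closed_fip_Inter)
      show "Oplus_closed S C" if "C \<in> \<K>" for C
        using that \<K> unfolding \<C>_def by blast
      fix \<F> assume "finite \<F>" "\<F> \<subseteq> \<K>"
      show "Oplus S \<inter> \<Inter>\<F> \<noteq> {}"
      proof (cases "\<F> = {}")
        case True
        then show ?thesis using left_ideal_nonempty[OF P] left_ideal_subset[OF P] by auto
      next
        case False
        have "subset.chain \<F> \<F>" using \<open>\<F> \<subseteq> \<K>\<close> chain by (auto simp: subset_chain_def)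
        then have "\<Inter>\<F> \<in> \<K>" using Inter_in_chain[OF \<open>finite \<F>\<close> False] \<open>\<F> \<subseteq> \<K>\<close> by blast
        then have "left_ideal (Oplus S) (bplus S) (\<Inter>\<F>)" using \<K> unfolding \<C>_def by blast
        then show ?thesis using left_ideal_nonempty left_ideal_subset by blast
      qed
    qed
    then have "\<Inter>\<K> \<noteq> {}" by blast
    moreover have "Oplus_closed S (\<Inter>\<K>)"
      using \<K> \<open>\<K> \<noteq> {}\<close> by (intro Oplus_closed_Inter) (auto simp: \<C>_def)
    moreover have "left_ideal (Oplus S) (bplus S) (\<Inter>\<K>)"
      using \<K> \<open>\<K> \<noteq> {}\<close> \<open>\<Inter>\<K> \<noteq> {}\<close> by (intro left_ideal_Inter) (auto simp: \<C>_def)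
    moreover have "\<Inter>\<K> \<subseteq> P" using \<K> \<open>\<K> \<noteq> {}\<close> unfolding \<C>_def by blast
    ultimately show "\<Inter>\<K> \<in> \<C>" unfolding \<C>_def by blast
  qed
  then obtain C0 where C0: "C0 \<in> \<C>" and min: "\<And>C. C \<in> \<C> \<Longrightarrow> C \<subseteq> C0 \<Longrightarrow> C = C0"
    by blast
  have "minimal_left_ideal (Oplus S) (bplus S) C0"
    unfolding minimal_left_ideal_def
  proof (intro conjI allI impI)
    show "left_ideal (Oplus S) (bplus S) C0" using C0 unfolding \<C>_def by blast
    fix L assume "left_ideal (Oplus S) (bplus S) L \<and> L \<subseteq> C0"
    then have L: "left_ideal (Oplus S) (bplus S) L" "L \<subseteq> C0" by blast+
    obtain v where "v \<in> L" using left_ideal_nonempty[OF L(1)] by blast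
    have "L \<subseteq> P" using L(2) C0 unfolding \<C>_def by blast
    with principal[OF L(1) _ \<open>v \<in> L\<close>] have "(\<lambda>q. bplus S q v) ` Oplus S = C0"
      using min L(2) by blast
    then show "L = C0" using principal[OF L(1) \<open>L \<subseteq> P\<close> \<open>v \<in> L\<close>] L(2) by blast
  qed
  then show ?thesis using C0 unfolding \<C>_def by blast
qed

section \<open>Limits along ultrafilters\<close>

lemma plim_eqI:
  fixes f :: "'a \<Rightarrow> 'x::t2_space"
  assumes p: "ultrafilter_on S p" and z: "\<And>U. open U \<Longrightarrow> z \<in> U \<Longrightarrow> {s\<in>S. f s \<in> U} \<in> p"
  shows "plim S p f = z"
  unfolding plim_def
proof (rule the_equality)
  show "\<forall>U. open U \<and> z \<in> U \<longrightarrow> {s\<in>S. f s \<in> U} \<in> p" using z by blast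
next
  fix w assume w: "\<forall>U. open U \<and> w \<in> U \<longrightarrow> {s\<in>S. f s \<in> U} \<in> p"
  show "w = z"
  proof (rule ccontr)
    assume "w \<noteq> z"
    then obtain U V where UV: "open U" "open V" "w \<in> U" "z \<in> V" "U \<inter> V = {}"
      using hausdorff[of w z] by blast
    then have "{s\<in>S. f s \<in> U} \<in> p" "{s\<in>S. f s \<in> V} \<in> p"
      using w z[of V] by blast+
    then have "{s\<in>S. f s \<in> U} \<inter> {s\<in>S. f s \<in> V} \<in> p"
      using uf_Int[OF p] by blast
    moreover have "{s\<in>S. f s \<in> U} \<inter> {s\<in>S. f s \<in> V} = {}" using UV(5) by blast
    ultimately show False using uf_empty[OF p] by simp
  qed
qed

lemma plim_exists:
  fixes f :: "'a \<Rightarrow> 'x::t2_space"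
  assumes p: "ultrafilter_on S p" and compact: "compact (UNIV :: 'x set)"
  shows "\<exists>z. \<forall>U. open U \<and> z \<in> U \<longrightarrow> {s\<in>S. f s \<in> U} \<in> p"
proof (rule ccontr)
  assume "\<nexists>z. \<forall>U. open U \<and> z \<in> U \<longrightarrow> {s\<in>S. f s \<in> U} \<in> p"
  then have "\<forall>z. \<exists>U. open U \<and> z \<in> U \<and> {s\<in>S. f s \<in> U} \<notin> p" by blast
  then obtain W where W: "\<forall>z. open (W z) \<and> z \<in> W z \<and> {s\<in>S. f s \<in> W z} \<notin> p"
    by (auto dest: choice)
  obtain K where "finite K" and cover: "UNIV \<subseteq> (\<Union>z\<in>K. W z)"
  proof (rule compactE_image[OF compact])
    show "open (W z)" for z using W by blast
    show "UNIV \<subseteq> (\<Union>z\<in>UNIV. W z)" using W by blast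
  qed
  define F where "F = (\<lambda>z. S - {s\<in>S. f s \<in> W z}) ` K"
  have "S - {s\<in>S. f s \<in> W z} \<in> p" for z
    using W uf_Diff_iff[OF p, of "{s\<in>S. f s \<in> W z}"] by blast
  then have "F \<subseteq> p" unfolding F_def by blast
  moreover have "finite F" using \<open>finite K\<close> unfolding F_def by simp
  ultimately obtain s where s: "s \<in> S" "\<forall>A\<in>F. s \<in> A" using uf_finite_Inter_nonempty[OF p] by blast
  obtain z where "z \<in> K" "f s \<in> W z" using cover by blast
  have "S - {t\<in>S. f t \<in> W z} \<in> F" unfolding F_def using \<open>z \<in> K\<close> by (rule imageI)
  with s(2) have "s \<in> S - {t\<in>S. f t \<in> W z}" by (rule bspec)
  with \<open>f s \<in> W z\<close> show False by simp
qed

lemma plim_nhds: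
  fixes f :: "'a \<Rightarrow> 'x::t2_space"
  assumes "ultrafilter_on S p" "compact (UNIV :: 'x set)" "open U" "plim S p f \<in> U"
  shows "{s\<in>S. f s \<in> U} \<in> p"
proof -
  obtain z where z: "\<forall>U. open U \<and> z \<in> U \<longrightarrow> {s\<in>S. f s \<in> U} \<in> p"
    using plim_exists[OF assms(1,2)] by blast
  then have "plim S p f = z" using plim_eqI[OF assms(1)] by blast
  then show ?thesis using z assms(3,4) by blast
qed

lemma Tbeta_bplus:
  fixes T :: "real \<Rightarrow> 'x::t2_space \<Rightarrow> 'x"
  assumes add: "\<forall>s\<in>S. \<forall>t\<in>S. s + t \<in> S" and dyn: "dyn_system S T"
    and p: "ultrafilter_on S p" and q: "ultrafilter_on S q"
  shows "Tbeta S T (bplus S q p) x = Tbeta S T q (Tbeta S T p x)"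
proof -
  have compact: "compact (UNIV :: 'x set)" using dyn by (simp add: dyn_system_def)
  have cont: "continuous_on UNIV (T s)" if "s \<in> S" for s
    using dyn that by (simp add: dyn_system_def)
  have comp: "T s (T t z) = T (s + t) z" if "s \<in> S" "t \<in> S" for s t z
    using dyn that unfolding dyn_system_def by (metis comp_apply)
  define w where "w = Tbeta S T p x"
  have "plim S (bplus S q p) (\<lambda>s. T s x) = Tbeta S T q w"
  proof (rule plim_eqI[OF ultrafilter_bplus[OF add q p]])
    fix U assume U: "open U" "Tbeta S T q w \<in> U"
    have "{s\<in>S. T s w \<in> U} \<subseteq> {s\<in>S. lshift S s {u\<in>S. T u x \<in> U} \<in> p}"
    proof
      fix s assume s: "s \<in> {s\<in>S. T s w \<in> U}"
      then have "open (T s -` U)" using U(1) cont by (simp add: continuous_on_open_vimage)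
      moreover have "plim S p (\<lambda>t. T t x) \<in> T s -` U"
        using s unfolding w_def Tbeta_def by simp
      ultimately have "{t\<in>S. T t x \<in> T s -` U} \<in> p"
        by (rule plim_nhds[OF p compact])
      moreover have "{t\<in>S. T t x \<in> T s -` U} = lshift S s {u\<in>S. T u x \<in> U}"
        using s add comp unfolding lshift_def by auto
      ultimately show "s \<in> {s\<in>S. lshift S s {u\<in>S. T u x \<in> U} \<in> p}" using s by simp
    qed
    moreover have "{s\<in>S. T s w \<in> U} \<in> q"
      using plim_nhds[OF q compact U(1)] U(2) unfolding Tbeta_def by simp
    ultimately show "{s\<in>S. T s x \<in> U} \<in> bplus S q p"
      using uf_upward[OF q] by (auto simp: bplus_iff)
  qed
  then show ?thesis unfolding w_def Tbeta_def by simp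
qed

lemma left_ideal_Tbeta_eq:
  fixes T :: "real \<Rightarrow> 'x::t2_space \<Rightarrow> 'x"
  assumes add: "\<forall>s\<in>S. \<forall>t\<in>S. s + t \<in> S" and pos: "S \<subseteq> {0<..}" and dyn: "dyn_system S T"
    and p: "p \<in> Oplus S" "Tbeta S T p x = Tbeta S T p y"
  shows "left_ideal (Oplus S) (bplus S) {u \<in> Oplus S. Tbeta S T u x = Tbeta S T u y}"
  unfolding left_ideal_def
proof (intro conjI ballI)
  show "{u \<in> Oplus S. Tbeta S T u x = Tbeta S T u y} \<noteq> {}" using p by blast
  fix r u assume r: "r \<in> Oplus S" and u: "u \<in> {u \<in> Oplus S. Tbeta S T u x = Tbeta S T u y}"
  then have "Tbeta S T (bplus S r u) x = Tbeta S T (bplus S r u) y"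
    using Tbeta_bplus[OF add dyn Oplus_ultrafilter Oplus_ultrafilter[OF r]] by simp
  with bplus_Oplus[OF add pos r] u
  show "bplus S r u \<in> {u \<in> Oplus S. Tbeta S T u x = Tbeta S T u y}" by blast
qed simp

section \<open>Proximality near zero\<close>

lemma diag_nbhd_UNIV: "diag_nbhd UNIV"
  unfolding diag_nbhd_def by auto

lemma diag_nbhd_Int: "diag_nbhd W \<Longrightarrow> diag_nbhd W' \<Longrightarrow> diag_nbhd (W \<inter> W')"
  unfolding diag_nbhd_def by (metis Int_iff Int_mono open_Int)

lemma Hausdorff_space_euclidean_t2: "Hausdorff_space (euclidean :: 'x::t2_space topology)"
  unfolding Hausdorff_space_def by (metis disjnt_def hausdorff open_openin)

text \<open>A compact Hausdorff space is normal, so distinct points have neighbourhoods with disjoint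
  closures.\<close>

lemma compact_t2_diag_nbhd_separating:
  fixes a b :: "'x::t2_space"
  assumes compact: "compact (UNIV :: 'x set)" and "a \<noteq> b"
  obtains U V W where "open U" "open V" "a \<in> U" "b \<in> V" "diag_nbhd W" "(U \<times> V) \<inter> W = {}"
proof -
  have "compact_space (euclidean :: 'x topology)"
    using compact by (simp add: compact_space_def)
  then have normal: "normal_space (euclidean :: 'x topology)"
    by (rule compact_Hausdorff_or_regular_imp_normal_space) (simp add: Hausdorff_space_euclidean_t2)
  have "closedin euclidean {a} \<and> closedin euclidean {b} \<and> disjnt {a} {b}"
    using \<open>a \<noteq> b\<close> by simp
  from normal[unfolded normal_space_disjoint_closures, rule_format, OF this]
  obtain U V where "openin euclidean U" "openin euclidean V" "{a} \<subseteq> U" "{b} \<subseteq> V"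
    and "disjnt (euclidean closure_of U) (euclidean closure_of V)"
    by blast
  then have UV: "open U" "open V" "a \<in> U" "b \<in> V" and disj: "closure U \<inter> closure V = {}"
    by (simp_all add: disjnt_def)
  define W where "W = - (closure U \<times> closure V)"
  have "open W" unfolding W_def by (intro open_Compl closed_Times closed_closure)
  moreover have "\<forall>z. (z, z) \<in> W" unfolding W_def using disj by blast
  ultimately have "diag_nbhd W" unfolding diag_nbhd_def by blast
  moreover have "(U \<times> V) \<inter> W = {}" unfolding W_def using closure_subset by blast
  ultimately show thesis using UV that by blast
qed

lemma proximal_near_zero_imp_Tbeta_eq:
  fixes T :: "real \<Rightarrow> 'x::t2_space \<Rightarrow> 'x" and x y :: 'x
  assumes dyn: "dyn_system S T" and prox: "proximal_near_zero S T x y"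
  shows "\<exists>q\<in>Oplus S. Tbeta S T q x = Tbeta S T q y"
proof -
  have compact: "compact (UNIV :: 'x set)" using dyn by (simp add: dyn_system_def)
  define A where "A W \<epsilon> = {s\<in>S. 0 < s \<and> s < \<epsilon> \<and> (T s x, T s y) \<in> W}" for W and \<epsilon> :: real
  define G where "G = {A W \<epsilon> | W \<epsilon>. diag_nbhd W \<and> \<epsilon> > 0}"
  have "has_fip S G"
  proof (rule has_fip_directed)
    show "G \<noteq> {}" unfolding G_def using diag_nbhd_UNIV zero_less_one by blast
    show "\<exists>s\<in>S. s \<in> B" if "B \<in> G" for B
    proof -
      obtain W \<epsilon> where "B = A W \<epsilon>" "diag_nbhd W" "\<epsilon> > 0" using \<open>B \<in> G\<close> unfolding G_def by blast
      moreover obtain s where "s \<in> S" "0 < s" "s < \<epsilon>" "(T s x, T s y) \<in> W"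
        using prox \<open>diag_nbhd W\<close> \<open>\<epsilon> > 0\<close> unfolding proximal_near_zero_def by blast
      ultimately show ?thesis unfolding A_def by blast
    qed
    show "\<exists>C\<in>G. C \<subseteq> B \<inter> B'" if B: "B \<in> G" "B' \<in> G" for B B'
    proof -
      obtain W \<epsilon> W' \<epsilon>' where "B = A W \<epsilon>" "B' = A W' \<epsilon>'" "diag_nbhd W" "diag_nbhd W'" "\<epsilon> > 0" "\<epsilon>' > 0"
        using B unfolding G_def by blast
      moreover have "A (W \<inter> W') (min \<epsilon> \<epsilon>') \<subseteq> A W \<epsilon> \<inter> A W' \<epsilon>'" unfolding A_def by auto
      moreover have "A (W \<inter> W') (min \<epsilon> \<epsilon>') \<in> G"
        using calculation diag_nbhd_Int unfolding G_def by (metis (mono_tags, lifting) min_less_iff_conj mem_Collect_eq)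
      ultimately show ?thesis by blast
    qed
  qed
  moreover have "G \<subseteq> Pow S" unfolding G_def A_def by auto
  ultimately obtain q where q: "ultrafilter_on S q" "G \<subseteq> q"
    using has_fip_imp_ultrafilter by blast
  have A_in: "A W \<epsilon> \<in> q" if "diag_nbhd W" "\<epsilon> > 0" for W \<epsilon>
    using q(2) that unfolding G_def by blast
  have "q \<in> Oplus S"
    unfolding Oplus_def betaS_def
  proof (intro CollectI conjI allI impI q(1))
    fix \<epsilon> :: real assume "\<epsilon> > 0"
    have "A UNIV \<epsilon> \<subseteq> S \<inter> {0<..<\<epsilon>}" unfolding A_def by auto
    then show "S \<inter> {0<..<\<epsilon>} \<in> q"
      using uf_upward[OF q(1) A_in[OF diag_nbhd_UNIV \<open>\<epsilon> > 0\<close>]] by blast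
  qed
  moreover have "Tbeta S T q x = Tbeta S T q y"
  proof (rule ccontr)
    assume "Tbeta S T q x \<noteq> Tbeta S T q y"
    then obtain U V W where UV: "open U" "open V" "Tbeta S T q x \<in> U" "Tbeta S T q y \<in> V"
      and W: "diag_nbhd W" "(U \<times> V) \<inter> W = {}"
      by (rule compact_t2_diag_nbhd_separating[OF compact])
    have "{s\<in>S. T s x \<in> U} \<in> q" "{s\<in>S. T s y \<in> V} \<in> q"
      using plim_nhds[OF q(1) compact] UV unfolding Tbeta_def by auto
    moreover have "A W 1 \<in> q" using A_in[OF W(1)] by simp
    ultimately have "{s\<in>S. T s x \<in> U} \<inter> {s\<in>S. T s y \<in> V} \<inter> A W 1 \<in> q"
      by (intro uf_Int[OF q(1)])
    moreover have "{s\<in>S. T s x \<in> U} \<inter> {s\<in>S. T s y \<in> V} \<inter> A W 1 = {}"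
      using W(2) unfolding A_def by blast
    ultimately show False using uf_empty[OF q(1)] by simp
  qed
  ultimately show ?thesis by blast
qed

theorem lemma2p9:
  fixes S :: "real set" and T :: "real \<Rightarrow> 'x::t2_space \<Rightarrow> 'x" and x y :: 'x
  assumes "dense_subsemigroup_pos S"
    and "dyn_system S T"
    and "proximal_near_zero S T x y"
  shows "\<exists>L. minimal_left_ideal (Oplus S) (bplus S) L \<and>
             (\<forall>u\<in>L. Tbeta S T u x = Tbeta S T u y)"
proof -
  have pos: "S \<subseteq> {0<..}" and add: "\<forall>s\<in>S. \<forall>t\<in>S. s + t \<in> S"
    using assms(1) unfolding dense_subsemigroup_pos_def by auto
  obtain p where "p \<in> Oplus S" "Tbeta S T p x = Tbeta S T p y"
    using proximal_near_zero_imp_Tbeta_eq[OF assms(2,3)] by blast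
  then have "left_ideal (Oplus S) (bplus S) {u \<in> Oplus S. Tbeta S T u x = Tbeta S T u y}"
    using left_ideal_Tbeta_eq[OF add pos assms(2)] by blast
  then obtain L where "minimal_left_ideal (Oplus S) (bplus S) L"
    and "L \<subseteq> {u \<in> Oplus S. Tbeta S T u x = Tbeta S T u y}"
    using left_ideal_contains_minimal[OF add pos] by blast
  then show ?thesis by blast
qed

end
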